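(* Let $G=(V,E)$ be a connected almost bipartite permutation graph that contains a hole, let $C$ be a shortest hole of $G$, $m=|C|$, and let $c_0,\dots,c_{m-1}$ be the vertices of $C$ in cyclic order (indices modulo $m$). For each $i$ let $A_i=\{v\in V: N(v)\cap C=\{c_{i-1},c_{i+1}\}\}$ and $B_i=\{v\in V: N(v)\cap C=\{c_i\}\}$ (indices of $A,B$ modulo $m$). Then for every $i\in\{0,\dots,m-1\}$: (1) $A_i$ and $B_i$ are independent sets; (2) for every $u\in A_i$ and every $w\in B_i$ we have $uw\in E$; (3) for every $u\in A_i$ we have $B_i\subseteq N(u)\subseteq B_{i-2}\cup A_{i-1}\cup B_i\cup A_{i+1}\cup B_{i+2}$; (4) for every $w\in B_i$ we have $A_i\subseteq N(w)\subseteq A_{i-2}\cup B_{i-1}\cup A_i\cup B_{i+1}\cup A_{i+2}$.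
   Context: All graphs are finite, simple, undirected; $N(v)$ is the open neighborhood of $v$. A hole is an induced cycle on at least five vertices. $K_3$ is the triangle, $C_k$ the cycle on $k$ vertices. $T_2$ is the tree on 7 vertices obtained from the claw $K_{1,3}$ by subdividing each edge once. $X_2$ is the 7-vertex graph obtained from a 4-cycle by attaching one new pendant vertex to each of three of its four vertices. $X_3$ is the 7-vertex graph obtained from the domino (two 4-cycles sharing exactly one edge) by attaching one new pendant vertex to one endpoint of the shared edge. A graph is an almost bipartite permutation graph if it contains none of $T_2, X_2, X_3, K_3, C_5,\dots,C_9$ as an induced subgraph. *)

theory Defs
  imports Main
begin

definition simple_graph :: "'a set \<Rightarrow> ('a \<Rightarrow> 'a \<Rightarrow> bool) \<Rightarrow> bool" where
  "simple_graph V E \<longleftrightarrow> finite V \<and> (\<forall>x y. E x y \<longrightarrow> x \<in> V \<and> y \<in> V)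
     \<and> (\<forall>x y. E x y \<longrightarrow> E y x) \<and> (\<forall>x. \<not> E x x)"

definition connected_graph :: "'a set \<Rightarrow> ('a \<Rightarrow> 'a \<Rightarrow> bool) \<Rightarrow> bool" where
  "connected_graph V E \<longleftrightarrow> (\<forall>x\<in>V. \<forall>y\<in>V. E\<^sup>*\<^sup>* x y)"

definition nbhd :: "'a set \<Rightarrow> ('a \<Rightarrow> 'a \<Rightarrow> bool) \<Rightarrow> 'a \<Rightarrow> 'a set" where
  "nbhd V E v = {u\<in>V. E v u}"

definition independent_set :: "('a \<Rightarrow> 'a \<Rightarrow> bool) \<Rightarrow> 'a set \<Rightarrow> bool" where
  "independent_set E S \<longleftrightarrow> (\<forall>x\<in>S. \<forall>y\<in>S. \<not> E x y)"

definition has_induced :: "'a set \<Rightarrow> ('a \<Rightarrow> 'a \<Rightarrow> bool) \<Rightarrow> nat \<Rightarrow> (nat \<Rightarrow> nat \<Rightarrow> bool) \<Rightarrow> bool" where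
  "has_induced V E k H \<longleftrightarrow> (\<exists>f. inj_on f {0..<k} \<and> f ` {0..<k} \<subseteq> V
      \<and> (\<forall>i<k. \<forall>j<k. E (f i) (f j) \<longleftrightarrow> H i j))"

definition edges_of :: "(nat \<times> nat) list \<Rightarrow> nat \<Rightarrow> nat \<Rightarrow> bool" where
  "edges_of L i j \<longleftrightarrow> (i, j) \<in> set L \<or> (j, i) \<in> set L"

definition cycle_pat :: "nat \<Rightarrow> nat \<Rightarrow> nat \<Rightarrow> bool" where
  "cycle_pat k i j \<longleftrightarrow> j = (i + 1) mod k \<or> i = (j + 1) mod k"

definition K3_pat :: "nat \<Rightarrow> nat \<Rightarrow> bool" where
  "K3_pat = edges_of [(0,1),(1,2),(0,2)]"

text \<open>T2: claw with centre 0, subdivided: 0-1-4, 0-2-5, 0-3-6.\<close>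
definition T2_pat :: "nat \<Rightarrow> nat \<Rightarrow> bool" where
  "T2_pat = edges_of [(0,1),(0,2),(0,3),(1,4),(2,5),(3,6)]"

text \<open>X2: 4-cycle 0-1-2-3-0 with pendants 4 at 0, 5 at 1, 6 at 2.\<close>
definition X2_pat :: "nat \<Rightarrow> nat \<Rightarrow> bool" where
  "X2_pat = edges_of [(0,1),(1,2),(2,3),(3,0),(0,4),(1,5),(2,6)]"

text \<open>X3: domino with 4-cycles 0-1-4-3-0 and 1-2-5-4-1 sharing edge 1-4,
  plus pendant 6 at 1.\<close>
definition X3_pat :: "nat \<Rightarrow> nat \<Rightarrow> bool" where
  "X3_pat = edges_of [(0,1),(1,2),(3,4),(4,5),(0,3),(1,4),(2,5),(1,6)]"

definition almost_bip_perm :: "'a set \<Rightarrow> ('a \<Rightarrow> 'a \<Rightarrow> bool) \<Rightarrow> bool" where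
  "almost_bip_perm V E \<longleftrightarrow>
     \<not> has_induced V E 7 T2_pat \<and> \<not> has_induced V E 7 X2_pat \<and>
     \<not> has_induced V E 7 X3_pat \<and> \<not> has_induced V E 3 K3_pat \<and>
     (\<forall>k\<in>{5..9}. \<not> has_induced V E k (cycle_pat k))"

definition is_hole_seq :: "'a set \<Rightarrow> ('a \<Rightarrow> 'a \<Rightarrow> bool) \<Rightarrow> nat \<Rightarrow> (nat \<Rightarrow> 'a) \<Rightarrow> bool" where
  "is_hole_seq V E m c \<longleftrightarrow> m \<ge> 5 \<and> inj_on c {0..<m} \<and> c ` {0..<m} \<subseteq> V
     \<and> (\<forall>i<m. \<forall>j<m. E (c i) (c j) \<longleftrightarrow> cycle_pat m i j)"

definition has_hole :: "'a set \<Rightarrow> ('a \<Rightarrow> 'a \<Rightarrow> bool) \<Rightarrow> bool" where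
  "has_hole V E \<longleftrightarrow> (\<exists>m c. is_hole_seq V E m c)"

definition shortest_hole_seq :: "'a set \<Rightarrow> ('a \<Rightarrow> 'a \<Rightarrow> bool) \<Rightarrow> nat \<Rightarrow> (nat \<Rightarrow> 'a) \<Rightarrow> bool" where
  "shortest_hole_seq V E m c \<longleftrightarrow> is_hole_seq V E m c
     \<and> (\<forall>k d. is_hole_seq V E k d \<longrightarrow> m \<le> k)"

definition cyc :: "nat \<Rightarrow> (nat \<Rightarrow> 'a) \<Rightarrow> int \<Rightarrow> 'a" where
  "cyc m c j = c (nat (j mod int m))"

definition A_set :: "'a set \<Rightarrow> ('a \<Rightarrow> 'a \<Rightarrow> bool) \<Rightarrow> nat \<Rightarrow> (nat \<Rightarrow> 'a) \<Rightarrow> int \<Rightarrow> 'a set" where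
  "A_set V E m c i = {v\<in>V. nbhd V E v \<inter> c ` {0..<m} = {cyc m c (i - 1), cyc m c (i + 1)}}"

definition B_set :: "'a set \<Rightarrow> ('a \<Rightarrow> 'a \<Rightarrow> bool) \<Rightarrow> nat \<Rightarrow> (nat \<Rightarrow> 'a) \<Rightarrow> int \<Rightarrow> 'a set" where
  "B_set V E m c i = {v\<in>V. nbhd V E v \<inter> c ` {0..<m} = {cyc m c i}}"

end

theory Submission
  imports Defs
begin

(* Since C_5, ..., C_9 are excluded, the shortest hole C has length m >= 10. Let x be a vertex
   off C with a neighbour c_a. If x also sees some c_(a+k) with 0 < k < m - 2, then it sees
   c_(a+2): otherwise its first neighbour after c_a would close a hole shorter than C. So the
   neighbours of x on C are spaced two apart, and three of them, c_a, c_(a+4), c_(a+8), would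
   be the spokes of a T_2; hence x lies in B_a, A_(a+1) or A_(a-1).
   Triangle-freeness gives (1) and an induced X_2 gives (2). For (3), replacing c_i by u in A_i
   yields another shortest hole, and the classification relative to it places every neighbour
   of u; a neighbour with no neighbour on C would complete an X_2. For (4), a neighbour of
   w in B_i that sees c_(i-1) or c_(i+1) is classified directly, and any other one is excluded
   by a C_5 or a T_2 through c_i and w. *)

lemma all_less_numeral:
  "(\<forall>i < numeral k. P i) \<longleftrightarrow> P (pred_numeral k) \<and> (\<forall>i < pred_numeral k. P i)"
  by (simp add: numeral_eq_Suc All_less_Suc)

lemma ex_less_numeral:
  "(\<exists>i < numeral k. P i) \<longleftrightarrow> P (pred_numeral k) \<or> (\<exists>i < pred_numeral k. P i)"
  by (simp add: numeral_eq_Suc Ex_less_Suc)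

(* Distinct non-adjacent pattern vertices have distinct neighbourhoods, so a map into a simple
   graph that preserves adjacency and non-adjacency is automatically injective. *)
definition twin_free_pattern :: "nat \<Rightarrow> (nat \<Rightarrow> nat \<Rightarrow> bool) \<Rightarrow> bool" where
  "twin_free_pattern k H \<longleftrightarrow> (\<forall>i<k. \<forall>j<k. H i j = H j i) \<and> (\<forall>i<k. \<not> H i i)
     \<and> (\<forall>i<k. \<forall>j<k. i \<noteq> j \<longrightarrow> H i j \<or> (\<exists>l<k. H i l \<noteq> H j l))"

lemma has_induced_list:
  assumes "simple_graph V E" and "twin_free_pattern k H"
    and "set xs \<subseteq> V" and "length xs = k"
    and adj: "\<forall>i<k. \<forall>j<k. i < j \<longrightarrow> (E (xs ! i) (xs ! j) \<longleftrightarrow> H i j)"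
  shows "has_induced V E k H"
proof -
  have E_sym: "\<And>x y. E x y \<Longrightarrow> E y x" and E_irrefl: "\<And>x. \<not> E x x"
    using assms(1) unfolding simple_graph_def by blast+
  have H: "\<forall>i<k. \<forall>j<k. H i j = H j i" "\<forall>i<k. \<not> H i i"
    "\<forall>i<k. \<forall>j<k. i \<noteq> j \<longrightarrow> H i j \<or> (\<exists>l<k. H i l \<noteq> H j l)"
    using assms(2) unfolding twin_free_pattern_def by blast+
  have adj': "E (xs ! i) (xs ! j) \<longleftrightarrow> H i j" if "i < k" "j < k" for i j
    using that adj H(1,2) E_irrefl E_sym by (cases i j rule: linorder_cases) blast+
  have "inj_on (\<lambda>i. xs ! i) {0..<k}"
  proof (rule inj_onI, rule ccontr)
    fix i j assume "i \<in> {0..<k}" "j \<in> {0..<k}" "xs ! i = xs ! j" "i \<noteq> j"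
    then show False
      using adj' H(3) E_irrefl by (metis atLeastLessThan_iff)
  qed
  moreover have "(\<lambda>i. xs ! i) ` {0..<k} \<subseteq> V"
    using assms(3,4) nth_mem by fastforce
  ultimately show ?thesis
    unfolding has_induced_def using adj' by blast
qed

lemma twin_free_K3: "twin_free_pattern 3 K3_pat"
  and twin_free_T2: "twin_free_pattern 7 T2_pat"
  and twin_free_X2: "twin_free_pattern 7 X2_pat"
  and twin_free_C5: "twin_free_pattern 5 (cycle_pat 5)"
  by (simp_all add: twin_free_pattern_def all_less_numeral ex_less_numeral
      K3_pat_def T2_pat_def X2_pat_def cycle_pat_def edges_of_def)

lemma cycle_pat_sym: "cycle_pat n k l \<longleftrightarrow> cycle_pat n l k"
  unfolding cycle_pat_def by blast

lemma cycle_pat_last: "k \<le> j \<Longrightarrow> cycle_pat (j + 2) k (j + 1) \<longleftrightarrow> k = 0 \<or> k = j"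
  unfolding cycle_pat_def by (cases "k = j") auto

locale abp_shortest_hole =
  fixes V :: "'a set" and E :: "'a \<Rightarrow> 'a \<Rightarrow> bool" and m :: nat and c :: "nat \<Rightarrow> 'a"
  assumes simple: "simple_graph V E"
    and abp: "almost_bip_perm V E"
    and shortest: "shortest_hole_seq V E m c"
begin

abbreviation C :: "'a set" where "C \<equiv> c ` {0..<m}"

abbreviation cy :: "int \<Rightarrow> 'a" where "cy \<equiv> cyc m c"

lemma E_sym: "E x y \<Longrightarrow> E y x"
  and E_irrefl: "\<not> E x x"
  and E_in_V: "E x y \<Longrightarrow> y \<in> V"
  using simple unfolding simple_graph_def by blast+

lemma hole: "is_hole_seq V E m c"
  and hole_length_minimal: "is_hole_seq V E k d \<Longrightarrow> m \<le> k"
  using shortest unfolding shortest_hole_seq_def by blast+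

lemma no_K3: "\<not> has_induced V E 3 K3_pat"
  and no_T2: "\<not> has_induced V E 7 T2_pat"
  and no_X2: "\<not> has_induced V E 7 X2_pat"
  and no_C5: "\<not> has_induced V E 5 (cycle_pat 5)"
  using abp unfolding almost_bip_perm_def by auto

lemma no_triangle: "E x y \<Longrightarrow> E y z \<Longrightarrow> E x z \<Longrightarrow> False"
  using no_K3 has_induced_list[OF simple twin_free_K3, of "[x, y, z]"] E_in_V E_sym
  by (auto simp: all_less_numeral K3_pat_def edges_of_def)

lemma hole_length_ge_10: "m \<ge> 10"
proof -
  have "m \<ge> 5" and "has_induced V E m (cycle_pat m)"
    using hole unfolding is_hole_seq_def has_induced_def by blast+
  moreover have "\<forall>k\<in>{5..9}. \<not> has_induced V E k (cycle_pat k)"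
    using abp unfolding almost_bip_perm_def by blast
  ultimately show ?thesis by force
qed

lemma cyc_index_less: "nat (p mod int m) < m"
  using hole_length_ge_10 by (simp add: nat_less_iff)

lemma cy_of_nat: "k < m \<Longrightarrow> cy (int k) = c k"
  unfolding cyc_def by simp

lemma C_eq_range_cy: "C = range cy"
proof
  show "C \<subseteq> range cy"
    using cy_of_nat by (metis atLeastLessThan_iff image_subsetI rangeI)
  show "range cy \<subseteq> C"
    unfolding cyc_def using cyc_index_less by auto
qed

lemma cy_in_C: "cy p \<in> C"
  by (simp add: C_eq_range_cy)

lemma cy_in_V: "cy p \<in> V"
  using hole cy_in_C unfolding is_hole_seq_def by (meson subsetD)

lemma cy_eq_iff: "cy p = cy q \<longleftrightarrow> int m dvd p - q"
proof -
  have "inj_on c {0..<m}"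
    using hole unfolding is_hole_seq_def by blast
  then have "cy p = cy q \<longleftrightarrow> nat (p mod int m) = nat (q mod int m)"
    unfolding cyc_def using cyc_index_less by (auto dest: inj_onD)
  also have "\<dots> \<longleftrightarrow> p mod int m = q mod int m"
    using hole_length_ge_10 by (simp add: nat_eq_iff)
  finally show ?thesis
    by (simp add: mod_eq_dvd_iff)
qed

lemma cy_adj_iff: "E (cy p) (cy q) \<longleftrightarrow> cy q = cy (p + 1) \<or> cy p = cy (q + 1)"
proof -
  define i j where "i = nat (p mod int m)" and "j = nat (q mod int m)"
  have ij: "i < m" "j < m" "cy p = c i" "cy q = c j" "int i = p mod int m" "int j = q mod int m"
    unfolding i_def j_def cyc_def using cyc_index_less hole_length_ge_10 by auto
  have "E (cy p) (cy q) \<longleftrightarrow> j = (i + 1) mod m \<or> i = (j + 1) mod m"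
    using hole ij unfolding is_hole_seq_def cycle_pat_def by auto
  also have "\<dots> \<longleftrightarrow> int j = (int i + 1) mod int m \<or> int i = (int j + 1) mod int m"
    by (metis of_nat_1 of_nat_add of_nat_eq_iff zmod_int)
  also have "\<dots> \<longleftrightarrow> int m dvd q - (p + 1) \<or> int m dvd p - (q + 1)"
    unfolding ij(5,6) by (simp add: mod_add_left_eq mod_eq_dvd_iff)
  finally show ?thesis
    by (simp add: cy_eq_iff)
qed

lemma cy_eq_iff_small: "\<bar>p - q\<bar> < int m \<Longrightarrow> cy p = cy q \<longleftrightarrow> p = q"
  unfolding cy_eq_iff using dvd_imp_le_int[of "p - q" "int m"] by auto

lemma cy_adj_iff_small: "\<bar>p - q\<bar> < int m - 1 \<Longrightarrow> E (cy p) (cy q) \<longleftrightarrow> \<bar>p - q\<bar> = 1"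
  unfolding cy_adj_iff by (subst (1 2) cy_eq_iff_small) auto

lemma cy_adj_succ: "E (cy p) (cy (p + 1))"
  using hole_length_ge_10 by (subst cy_adj_iff_small) auto

lemma cy_offset: "\<exists>k<m. cy b = cy (a + int k)"
proof (intro exI conjI)
  show "nat ((b - a) mod int m) < m"
    by (rule cyc_index_less)
  show "cy b = cy (a + int (nat ((b - a) mod int m)))"
    using hole_length_ge_10 by (simp add: cy_eq_iff mod_eq_dvd_iff [symmetric] mod_add_right_eq)
qed

definition A_type :: "'a \<Rightarrow> int \<Rightarrow> bool" where
  "A_type x a \<longleftrightarrow> (\<forall>b. E x (cy b) \<longleftrightarrow> cy b = cy (a - 1) \<or> cy b = cy (a + 1))"

definition B_type :: "'a \<Rightarrow> int \<Rightarrow> bool" where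
  "B_type x a \<longleftrightarrow> (\<forall>b. E x (cy b) \<longleftrightarrow> cy b = cy a)"

lemma A_type_nbr: "A_type x a \<Longrightarrow> E x (cy b) \<longleftrightarrow> cy b = cy (a - 1) \<or> cy b = cy (a + 1)"
  and B_type_nbr: "B_type x a \<Longrightarrow> E x (cy b) \<longleftrightarrow> cy b = cy a"
  unfolding A_type_def B_type_def by blast+

lemma nbhd_inter_C_eq_iff:
  assumes "T \<subseteq> C"
  shows "nbhd V E x \<inter> C = T \<longleftrightarrow> (\<forall>b. E x (cy b) \<longleftrightarrow> cy b \<in> T)"
proof
  assume "nbhd V E x \<inter> C = T"
  then show "\<forall>b. E x (cy b) \<longleftrightarrow> cy b \<in> T"
    unfolding nbhd_def using cy_in_C cy_in_V by blast
next
  assume T: "\<forall>b. E x (cy b) \<longleftrightarrow> cy b \<in> T"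
  show "nbhd V E x \<inter> C = T"
  proof (intro equalityI subsetI)
    fix y assume "y \<in> nbhd V E x \<inter> C"
    then show "y \<in> T"
      unfolding nbhd_def C_eq_range_cy using T by auto
  next
    fix y assume "y \<in> T"
    then obtain b where "y = cy b"
      using assms unfolding C_eq_range_cy by auto
    then show "y \<in> nbhd V E x \<inter> C"
      unfolding nbhd_def using T \<open>y \<in> T\<close> cy_in_C cy_in_V by auto
  qed
qed

lemma A_set_iff: "x \<in> A_set V E m c a \<longleftrightarrow> x \<in> V \<and> A_type x a"
  unfolding A_set_def A_type_def by (simp add: nbhd_inter_C_eq_iff cy_in_C)

lemma B_set_iff: "x \<in> B_set V E m c a \<longleftrightarrow> x \<in> V \<and> B_type x a"
  unfolding B_set_def B_type_def by (simp add: nbhd_inter_C_eq_iff cy_in_C)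

lemma A_type_cy: "A_type (cy a) a"
  unfolding A_type_def cy_adj_iff by (auto simp: cy_eq_iff algebra_simps)

lemma A_type_cy_eq:
  assumes "A_type (cy k) a"
  shows "cy k = cy a"
proof -
  have "cy b = cy (a - 1) \<or> cy b = cy (a + 1)" if "b = k - 1 \<or> b = k + 1" for b
    using assms A_type_cy[of k] that unfolding A_type_def by auto
  then have "int m dvd k + 1 - (a - 1) \<or> int m dvd k + 1 - (a + 1)"
    and "int m dvd k - 1 - (a - 1) \<or> int m dvd k - 1 - (a + 1)"
    unfolding cy_eq_iff by blast+
  moreover have "\<not> (int m dvd k + 1 - (a - 1) \<and> int m dvd k - 1 - (a + 1))"
  proof
    assume "int m dvd k + 1 - (a - 1) \<and> int m dvd k - 1 - (a + 1)"
    then have "int m dvd 4"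
      using dvd_diff by fastforce
    then show False
      using hole_length_ge_10 zdvd_imp_le by fastforce
  qed
  ultimately show ?thesis
    by (auto simp: cy_eq_iff)
qed

lemma no_triangle_cy: "E x (cy p) \<Longrightarrow> \<not> E x (cy (p + 1))"
  using no_triangle cy_adj_succ by blast

lemma detour_hole:
  assumes "x \<in> V" "x \<notin> C" and x_a: "E x (cy a)" and x_aj: "E x (cy (a + int j))"
    and "3 \<le> j" "j + 2 \<le> m"
    and between: "\<forall>k. 0 < k \<longrightarrow> k < j \<longrightarrow> \<not> E x (cy (a + int k))"
  shows "is_hole_seq V E (j + 2) (\<lambda>k. if k \<le> j then cy (a + int k) else x)"
    (is "is_hole_seq V E _ ?d")
proof -
  have x_ne: "cy p \<noteq> x" for p
    using \<open>x \<notin> C\<close> cy_in_C by metis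
  have x_path: "E x (cy (a + int k)) \<longleftrightarrow> k = 0 \<or> k = j" if "k \<le> j" for k
    using between x_a x_aj that by (cases "k = 0 \<or> k = j") auto
  have "inj_on ?d {0..<j + 2}"
  proof (rule inj_onI)
    fix k l assume "k \<in> {0..<j + 2}" "l \<in> {0..<j + 2}" "?d k = ?d l"
    then show "k = l"
      using x_ne \<open>j + 2 \<le> m\<close> cy_eq_iff_small[of "a + int k" "a + int l"]
      by (auto split: if_splits)
  qed
  moreover have "?d ` {0..<j + 2} \<subseteq> V"
    using cy_in_V \<open>x \<in> V\<close> by auto
  moreover have "E (?d k) (?d l) \<longleftrightarrow> cycle_pat (j + 2) k l" if "k < j + 2" "l < j + 2" for k l
  proof (cases "k \<le> j"; cases "l \<le> j")
    assume "k \<le> j" "l \<le> j"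
    then show ?thesis
      using \<open>j + 2 \<le> m\<close> by (auto simp: cy_adj_iff_small cycle_pat_def)
  next
    assume "k \<le> j" "\<not> l \<le> j"
    then show ?thesis
      using that x_path[of k] cycle_pat_last[of k j] E_sym by (auto simp: less_Suc_eq)
  next
    assume "\<not> k \<le> j" "l \<le> j"
    then show ?thesis
      using that x_path[of l] cycle_pat_last[of l j] cycle_pat_sym by (auto simp: less_Suc_eq)
  next
    assume "\<not> k \<le> j" "\<not> l \<le> j"
    then have "k = j + 1" "l = j + 1"
      using that by auto
    then show ?thesis
      using E_irrefl by (simp add: cycle_pat_def)
  qed
  ultimately show ?thesis
    unfolding is_hole_seq_def using \<open>3 \<le> j\<close> by auto
qed

lemma nbr_two_ahead:
  assumes "x \<in> V" "x \<notin> C" "E x (cy a)" "E x (cy (a + int k))" "0 < k" "k + 2 < m"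
  shows "E x (cy (a + 2))"
proof -
  obtain j where j: "0 < j" "E x (cy (a + int j))"
    and first: "\<forall>i<j. \<not> (0 < i \<and> E x (cy (a + int i)))"
    using assms(4,5) exists_least_iff[of "\<lambda>i. 0 < i \<and> E x (cy (a + int i))"] by blast
  have "j \<le> k"
    using first assms(4,5) not_less by blast
  have "j \<noteq> 1"
    using j no_triangle_cy assms(3) by auto
  moreover have "\<not> 3 \<le> j"
  proof
    assume "3 \<le> j"
    then have "is_hole_seq V E (j + 2) (\<lambda>i. if i \<le> j then cy (a + int i) else x)"
      using detour_hole[OF assms(1-3) j(2) \<open>3 \<le> j\<close>] first \<open>j \<le> k\<close> assms(6) by auto
    then show False
      using hole_length_minimal \<open>j \<le> k\<close> assms(6) by fastforce
  qed
  ultimately have "j = 2"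
    using j(1) by linarith
  then show ?thesis
    using j(2) by simp
qed

lemma cy_add_m_minus: "k \<le> m \<Longrightarrow> cy (a + int (m - k)) = cy (a - int k)"
  by (simp add: cy_eq_iff of_nat_diff)

lemma nbrs_if_not_two_ahead:
  assumes "x \<in> V" "x \<notin> C" "E x (cy a)" "\<not> E x (cy (a + 2))" "E x (cy b)"
  shows "cy b = cy a \<or> cy b = cy (a - 2)"
proof -
  obtain k where "k < m" and b: "cy b = cy (a + int k)"
    using cy_offset by blast
  then consider "k = 0" | "0 < k" "k + 2 < m" | "k = m - 2" | "k = m - 1"
    by linarith
  then show ?thesis
  proof cases
    case 2
    then show ?thesis
      using nbr_two_ahead assms b by metis
  next
    case 3
    then show ?thesis
      using b cy_add_m_minus[of 2 a] hole_length_ge_10 by simp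
  next
    case 4
    then have "E x (cy (a - 1))"
      using assms(5) b cy_add_m_minus[of 1 a] hole_length_ge_10 by simp
    then show ?thesis
      using no_triangle_cy[of x "a - 1"] assms(3) by auto
  qed (use b in simp)
qed

lemma no_T2_spokes:
  assumes "x \<in> V" "E x (cy a)" "E x (cy (a + 4))" "E x (cy (a + 8))"
  shows False
proof -
  have "\<not> E x (cy (a + 1))" "\<not> E x (cy (a + 5))" "\<not> E x (cy (a + 7))"
    using no_triangle_cy[OF assms(2)] no_triangle_cy[OF assms(3)] no_triangle_cy[of x "a + 7"] assms(4)
    by (auto simp: add.assoc)
  then have "has_induced V E 7 T2_pat"
    using assms hole_length_ge_10
    by (intro has_induced_list[OF simple twin_free_T2,
          of "[x, cy a, cy (a + 4), cy (a + 8), cy (a + 1), cy (a + 5), cy (a + 7)]"])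
      (simp_all add: cy_in_V all_less_numeral T2_pat_def edges_of_def cy_adj_iff_small)
  then show False
    using no_T2 by contradiction
qed

lemma A_or_B_type_if_cycle_nbr:
  assumes x: "x \<in> V" "x \<notin> C" and x_a: "E x (cy a)"
  shows "B_type x a \<or> A_type x (a + 1) \<or> A_type x (a - 1)"
proof (cases "E x (cy (a + 2))")
  case False
  then have "E x (cy b) \<longleftrightarrow> cy b = cy a \<or> (E x (cy (a - 2)) \<and> cy b = cy (a - 2))" for b
    using nbrs_if_not_two_ahead[OF x x_a False, of b] x_a by auto
  then show ?thesis
    unfolding A_type_def B_type_def by (cases "E x (cy (a - 2))") auto
next
  case x_a2: True
  show ?thesis
  proof (cases "E x (cy (a + 4))")
    case False
    then have "\<not> E x (cy (a + 2 + 2))"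
      by (simp add: add.assoc)
    then have "E x (cy b) \<longleftrightarrow> cy b = cy a \<or> cy b = cy (a + 2)" for b
      using nbrs_if_not_two_ahead[OF x x_a2, of b] x_a x_a2 by auto
    then show ?thesis
      unfolding A_type_def by (simp add: algebra_simps)
  next
    case x_a4: True
    have x_a6: "E x (cy (a + 4 + 2))"
    proof (rule nbr_two_ahead[OF x x_a4])
      show "E x (cy (a + 4 + int (m - 4)))"
        using x_a hole_length_ge_10 by (subst cy_add_m_minus) auto
    qed (use hole_length_ge_10 in auto)
    have "E x (cy (a + 4 + 2 + 2))"
    proof (rule nbr_two_ahead[OF x x_a6])
      show "E x (cy (a + 4 + 2 + int (m - 6)))"
        using x_a hole_length_ge_10 by (subst cy_add_m_minus) auto
    qed (use hole_length_ge_10 in auto)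
    then show ?thesis
      using no_T2_spokes[OF x(1) x_a x_a4] by (simp add: add.assoc)
  qed
qed

lemma independent_if_common_nbr:
  assumes "\<And>x. x \<in> S \<Longrightarrow> E x y"
  shows "independent_set E S"
  unfolding independent_set_def using assms no_triangle E_sym by metis

lemma independent_A_set: "independent_set E (A_set V E m c a)"
  by (rule independent_if_common_nbr[where y = "cy (a - 1)"]) (simp add: A_set_iff A_type_def)

lemma independent_B_set: "independent_set E (B_set V E m c a)"
  by (rule independent_if_common_nbr[where y = "cy a"]) (simp add: B_set_iff B_type_def)

lemma A_B_type_adjacent:
  assumes "u \<in> V" "A_type u a" "w \<in> V" "B_type w a"
  shows "E u w"
proof (rule ccontr)
  assume "\<not> E u w"
  moreover have "E (cy p) u \<longleftrightarrow> E u (cy p)" "E (cy p) w \<longleftrightarrow> E w (cy p)" for p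
    using E_sym by blast+
  ultimately have "has_induced V E 7 X2_pat"
    using assms hole_length_ge_10 unfolding A_type_def B_type_def
    by (intro has_induced_list[OF simple twin_free_X2,
          of "[cy (a - 1), cy a, cy (a + 1), u, cy (a - 2), w, cy (a + 2)]"])
      (simp_all add: cy_in_V all_less_numeral X2_pat_def edges_of_def cy_adj_iff_small cy_eq_iff_small)
  then show False
    using no_X2 by contradiction
qed

lemma nbhd_B_type:
  assumes w: "w \<in> V" "B_type w a" and x: "x \<in> V" "E w x"
  shows "A_type x (a - 2) \<or> B_type x (a - 1) \<or> A_type x a \<or> B_type x (a + 1) \<or> A_type x (a + 2)"
proof (cases "x \<in> C")
  case True
  then obtain b where "x = cy b"
    unfolding C_eq_range_cy by blast
  then have "x = cy a"
    using B_type_nbr[OF w(2), of b] x(2) by auto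
  then show ?thesis
    using A_type_cy by blast
next
  case x_C: False
  have w_nbrs: "E w (cy p) \<longleftrightarrow> cy p = cy a" "E (cy p) w \<longleftrightarrow> cy p = cy a" for p
    using w(2) E_sym unfolding B_type_def by blast+
  have x_sym: "E (cy p) x \<longleftrightarrow> E x (cy p)" for p
    using E_sym by blast
  have "\<not> E x (cy a)"
    using no_triangle x(2) w_nbrs by blast
  consider "E x (cy (a + 1))" | "E x (cy (a - 1))"
    | "\<not> E x (cy (a + 1))" "\<not> E x (cy (a - 1))" "E x (cy (a + 2))"
    | "\<not> E x (cy (a + 1))" "\<not> E x (cy (a - 1))" "E x (cy (a - 2))"
    | "\<not> E x (cy (a + 1))" "\<not> E x (cy (a - 1))" "\<not> E x (cy (a + 2))" "\<not> E x (cy (a - 2))"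
    by blast
  then show ?thesis
  proof cases
    case 1
    then show ?thesis
      using A_or_B_type_if_cycle_nbr[OF x(1) x_C, of "a + 1"] by (auto simp: algebra_simps)
  next
    case 2
    then show ?thesis
      using A_or_B_type_if_cycle_nbr[OF x(1) x_C, of "a - 1"] by (auto simp: algebra_simps)
  next
    case 3
    then have "has_induced V E 5 (cycle_pat 5)"
      using \<open>\<not> E x (cy a)\<close> x w E_sym[OF x(2)] hole_length_ge_10
      by (intro has_induced_list[OF simple twin_free_C5, of "[cy a, cy (a + 1), cy (a + 2), x, w]"])
        (simp_all add: cy_in_V all_less_numeral cycle_pat_def cy_adj_iff_small cy_eq_iff_small w_nbrs x_sym)
    then show ?thesis
      using no_C5 by contradiction
  next
    case 4
    then have "has_induced V E 5 (cycle_pat 5)"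
      using \<open>\<not> E x (cy a)\<close> x w E_sym[OF x(2)] hole_length_ge_10
      by (intro has_induced_list[OF simple twin_free_C5, of "[cy a, cy (a - 1), cy (a - 2), x, w]"])
        (simp_all add: cy_in_V all_less_numeral cycle_pat_def cy_adj_iff_small cy_eq_iff_small w_nbrs x_sym)
    then show ?thesis
      using no_C5 by contradiction
  next
    case 5
    then have "has_induced V E 7 T2_pat"
      using \<open>\<not> E x (cy a)\<close> x w E_sym[OF x(2)] hole_length_ge_10
      by (intro has_induced_list[OF simple twin_free_T2,
            of "[cy a, cy (a - 1), cy (a + 1), w, cy (a - 2), cy (a + 2), x]"])
        (simp_all add: cy_in_V all_less_numeral T2_pat_def edges_of_def cy_adj_iff_small
          cy_eq_iff_small w_nbrs x_sym)
    then show ?thesis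
      using no_T2 by contradiction
  qed
qed

lemma cyc_swap: "cyc m (c(nat (a mod int m) := u)) p = (if cy p = cy a then u else cy p)"
proof -
  have "cy p = cy a \<longleftrightarrow> nat (p mod int m) = nat (a mod int m)"
    using hole_length_ge_10 by (simp add: cy_eq_iff eq_nat_nat_iff flip: mod_eq_dvd_iff)
  then show ?thesis
    unfolding cyc_def by simp
qed

lemma A_type_same_nbrs: "A_type u a \<Longrightarrow> E u (cy b) \<longleftrightarrow> E (cy a) (cy b)"
  using A_type_cy[of a] unfolding A_type_def by blast

lemma swap_shortest_hole:
  assumes u: "u \<in> V" "A_type u a"
  shows "abp_shortest_hole V E m (c(nat (a mod int m) := u))"
proof -
  define i where "i = nat (a mod int m)"
  have i: "i < m" "cy a = c i"
    unfolding i_def cyc_def using cyc_index_less by auto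
  have inj_c: "inj_on c {0..<m}"
    using hole unfolding is_hole_seq_def by blast
  have "u \<notin> c ` ({0..<m} - {i})"
  proof
    assume "u \<in> c ` ({0..<m} - {i})"
    then obtain k where k: "k < m" "k \<noteq> i" "u = c k"
      by fastforce
    then have "c k = c i"
      using A_type_cy_eq[of "int k" a] u(2) cy_of_nat i by simp
    then show False
      using inj_c k i by (auto dest: inj_onD)
  qed
  moreover have "inj_on (c(i := u)) ({0..<m} - {i})"
    using inj_c by (simp add: inj_on_def)
  ultimately have "inj_on (c(i := u)) {0..<m}"
    using i inj_on_insert[of "c(i := u)" i "{0..<m} - {i}"] by (simp add: insert_absorb)
  moreover have "E ((c(i := u)) p) ((c(i := u)) q) \<longleftrightarrow> E (c p) (c q)" if "p < m" "q < m" for p q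
    using A_type_same_nbrs[OF u(2)] cy_of_nat that i E_sym E_irrefl by (metis fun_upd_apply)
  ultimately have "is_hole_seq V E m (c(i := u))"
    using hole u(1) unfolding is_hole_seq_def by auto
  then show ?thesis
    unfolding i_def using simple abp hole_length_minimal
    by unfold_locales (auto simp: shortest_hole_seq_def)
qed

lemma type_if_one_nbr_off:
  assumes "cy q \<noteq> cy a" and nbrs: "\<And>b. cy b \<noteq> cy a \<Longrightarrow> E x (cy b) \<longleftrightarrow> cy b = cy q"
  shows "(\<forall>b. E x (cy b) \<longleftrightarrow> cy b = cy a \<or> cy b = cy q) \<or> B_type x q"
proof (cases "E x (cy a)")
  case True
  then have "E x (cy b) \<longleftrightarrow> cy b = cy a \<or> cy b = cy q" for b
    using nbrs[of b] by (cases "cy b = cy a") auto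
  then show ?thesis
    by blast
next
  case False
  then have "E x (cy b) \<longleftrightarrow> cy b = cy q" for b
    using nbrs[of b] assms(1) by (cases "cy b = cy a") auto
  then show ?thesis
    unfolding B_type_def by blast
qed

lemma no_X2_pendant:
  assumes u: "u \<in> V" "A_type u a" and x: "x \<in> V" "E u x" and x_off: "\<And>b. \<not> E x (cy b)"
  shows False
proof -
  have "E (cy p) u \<longleftrightarrow> E u (cy p)" "E (cy p) x \<longleftrightarrow> E x (cy p)" for p
    using E_sym by blast+
  then have "has_induced V E 7 X2_pat"
    using u x x_off hole_length_ge_10 unfolding A_type_def
    by (intro has_induced_list[OF simple twin_free_X2,
          of "[cy (a + 1), u, cy (a - 1), cy a, cy (a + 2), x, cy (a - 2)]"])
      (simp_all add: cy_in_V all_less_numeral X2_pat_def edges_of_def cy_adj_iff_small cy_eq_iff_small)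
  then show False
    using no_X2 by contradiction
qed

lemma nbhd_A_type:
  assumes u: "u \<in> V" "A_type u a" and x: "x \<in> V" "E u x"
  shows "A_type x (a - 1) \<or> A_type x (a + 1) \<or> B_type x (a - 2) \<or> B_type x a \<or> B_type x (a + 2)"
proof (cases "x \<in> C")
  case True
  then obtain b where "x = cy b"
    unfolding C_eq_range_cy by blast
  then have "x = cy (a - 1) \<or> x = cy (a + 1)"
    using A_type_nbr[OF u(2), of b] x(2) by auto
  then show ?thesis
    using A_type_cy by blast
next
  case x_C: False
  interpret swapped: abp_shortest_hole V E m "c(nat (a mod int m) := u)"
    by (rule swap_shortest_hole[OF u])
  have swapped_cy: "swapped.cy p = (if cy p = cy a then u else cy p)" for p
    by (rule cyc_swap)
  have u_off: "cy p \<noteq> u" if "cy p \<noteq> cy a" for p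
    using A_type_cy_eq[of p a] u(2) that by auto
  have a_pm_2: "cy (a + 2) \<noteq> cy a" "cy (a - 2) \<noteq> cy a"
    using hole_length_ge_10 by (simp_all add: cy_eq_iff_small)
  have "x \<notin> swapped.C"
    using x_C E_irrefl x(2) cy_in_C unfolding swapped.C_eq_range_cy swapped_cy by auto
  moreover have "E x (swapped.cy a)"
    using swapped_cy E_sym x(2) by simp
  ultimately have "swapped.B_type x a \<or> swapped.A_type x (a + 1) \<or> swapped.A_type x (a - 1)"
    by (rule swapped.A_or_B_type_if_cycle_nbr[OF x(1)])
  then show ?thesis
  proof (elim disjE)
    assume "swapped.B_type x a"
    then have off_a: "\<not> E x (cy b)" if "cy b \<noteq> cy a" for b
      using swapped.B_type_nbr[of x a b] that u_off[OF that] by (simp add: swapped_cy)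
    show ?thesis
    proof (cases "E x (cy a)")
      case True
      then have "B_type x a"
        unfolding B_type_def using off_a by auto
      then show ?thesis
        by blast
    next
      case False
      then have "\<not> E x (cy b)" for b
        using off_a by (cases "cy b = cy a") auto
      then show ?thesis
        using no_X2_pendant[OF u x] by blast
    qed
  next
    assume "swapped.A_type x (a + 1)"
    then have "E x (cy b) \<longleftrightarrow> cy b = cy (a + 2)" if "cy b \<noteq> cy a" for b
      using swapped.A_type_nbr[of x "a + 1" b] that u_off[OF that] a_pm_2 by (simp add: swapped_cy add.assoc)
    then have "(\<forall>b. E x (cy b) \<longleftrightarrow> cy b = cy a \<or> cy b = cy (a + 2)) \<or> B_type x (a + 2)"
      by (rule type_if_one_nbr_off[OF a_pm_2(1)])
    then show ?thesis
      unfolding A_type_def by (auto simp: add.assoc)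
  next
    assume "swapped.A_type x (a - 1)"
    then have "E x (cy b) \<longleftrightarrow> cy b = cy (a - 2)" if "cy b \<noteq> cy a" for b
      using swapped.A_type_nbr[of x "a - 1" b] that u_off[OF that] a_pm_2 by (simp add: swapped_cy)
    then have "(\<forall>b. E x (cy b) \<longleftrightarrow> cy b = cy a \<or> cy b = cy (a - 2)) \<or> B_type x (a - 2)"
      by (rule type_if_one_nbr_off[OF a_pm_2(2)])
    then show ?thesis
      unfolding A_type_def by (auto simp: disj_commute)
  qed
qed

lemma A_set_B_set_adjacent: "u \<in> A_set V E m c a \<Longrightarrow> w \<in> B_set V E m c a \<Longrightarrow> E u w"
  unfolding A_set_iff B_set_iff using A_B_type_adjacent by blast

lemma nbhd_A_set:
  assumes "u \<in> A_set V E m c a"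
  shows "B_set V E m c a \<subseteq> nbhd V E u"
    and "nbhd V E u \<subseteq> B_set V E m c (a - 2) \<union> A_set V E m c (a - 1) \<union> B_set V E m c a
           \<union> A_set V E m c (a + 1) \<union> B_set V E m c (a + 2)"
proof -
  show "B_set V E m c a \<subseteq> nbhd V E u"
    using assms A_set_B_set_adjacent B_set_iff unfolding nbhd_def by blast
  show "nbhd V E u \<subseteq> B_set V E m c (a - 2) \<union> A_set V E m c (a - 1) \<union> B_set V E m c a
           \<union> A_set V E m c (a + 1) \<union> B_set V E m c (a + 2)"
  proof
    fix x assume "x \<in> nbhd V E u"
    then show "x \<in> B_set V E m c (a - 2) \<union> A_set V E m c (a - 1) \<union> B_set V E m c a
           \<union> A_set V E m c (a + 1) \<union> B_set V E m c (a + 2)"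
      using nbhd_A_type[of u a x] assms unfolding nbhd_def Un_iff A_set_iff B_set_iff by blast
  qed
qed

lemma nbhd_B_set:
  assumes "w \<in> B_set V E m c a"
  shows "A_set V E m c a \<subseteq> nbhd V E w"
    and "nbhd V E w \<subseteq> A_set V E m c (a - 2) \<union> B_set V E m c (a - 1) \<union> A_set V E m c a
           \<union> B_set V E m c (a + 1) \<union> A_set V E m c (a + 2)"
proof -
  show "A_set V E m c a \<subseteq> nbhd V E w"
    using assms A_set_B_set_adjacent A_set_iff E_sym unfolding nbhd_def by blast
  show "nbhd V E w \<subseteq> A_set V E m c (a - 2) \<union> B_set V E m c (a - 1) \<union> A_set V E m c a
           \<union> B_set V E m c (a + 1) \<union> A_set V E m c (a + 2)"
  proof
    fix x assume "x \<in> nbhd V E w"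
    then show "x \<in> A_set V E m c (a - 2) \<union> B_set V E m c (a - 1) \<union> A_set V E m c a
           \<union> B_set V E m c (a + 1) \<union> A_set V E m c (a + 2)"
      using nbhd_B_type[of w a x] assms unfolding nbhd_def Un_iff A_set_iff B_set_iff by blast
  qed
qed

end

theorem proposition3p5:
  fixes V :: "'a set" and E :: "'a \<Rightarrow> 'a \<Rightarrow> bool" and m :: nat and c :: "nat \<Rightarrow> 'a"
  assumes "simple_graph V E" and "connected_graph V E" and "almost_bip_perm V E"
    and "has_hole V E"
    and "shortest_hole_seq V E m c"
  defines "A \<equiv> A_set V E m c" and "B \<equiv> B_set V E m c" and "N \<equiv> nbhd V E"
  shows "\<forall>i::nat < m.
     independent_set E (A (int i)) \<and> independent_set E (B (int i))
   \<and> (\<forall>u\<in>A (int i). \<forall>w\<in>B (int i). E u w)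
   \<and> (\<forall>u\<in>A (int i). B (int i) \<subseteq> N u \<and>
        N u \<subseteq> B (int i - 2) \<union> A (int i - 1) \<union> B (int i) \<union> A (int i + 1) \<union> B (int i + 2))
   \<and> (\<forall>w\<in>B (int i). A (int i) \<subseteq> N w \<and>
        N w \<subseteq> A (int i - 2) \<union> B (int i - 1) \<union> A (int i) \<union> B (int i + 1) \<union> A (int i + 2))"
proof -
  interpret abp_shortest_hole V E m c
    using assms(1,3,5) by unfold_locales
  show ?thesis
    unfolding A_def B_def N_def
    using independent_A_set independent_B_set A_set_B_set_adjacent nbhd_A_set nbhd_B_set
    by blast
qed

end
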